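(* Let $r$ and $k$ be positive integers with $r+k\equiv 0\pmod 2$ and $k\le r$, let $H$ be the complete graph with $V(H)=[r+k]$, and let $\mathbf{E}=(E_0,E_1,E_2)$ be an ordered partition of $E(H)$. If $|E_1|+2|E_2|<2(r+k-1)$, then $H$ contains a perfect matching which is also a good matching for $\mathbf{E}$.
   Context: $[m]=\{1,\dots,m\}$. An ordered partition $(E_0,E_1,E_2)$ of a set $X$ is a triple of pairwise disjoint (possibly empty) sets with union $X$. A matching $M$ of $H$ is a good matching for $\mathbf{E}=(E_0,E_1,E_2)$ if $M\cap E_2=\emptyset$ and $|M\cap E_1|\le 1$. *)

theory Defs
  imports Main
begin

definition complete_edges :: "'a set \<Rightarrow> 'a set set" where
  "complete_edges V = {e. e \<subseteq> V \<and> card e = 2}"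

definition is_matching :: "'a set set \<Rightarrow> 'a set set \<Rightarrow> bool" where
  "is_matching E M \<longleftrightarrow> M \<subseteq> E \<and> (\<forall>e\<in>M. \<forall>f\<in>M. e \<noteq> f \<longrightarrow> e \<inter> f = {})"

definition is_perfect_matching :: "'a set \<Rightarrow> 'a set set \<Rightarrow> 'a set set \<Rightarrow> bool" where
  "is_perfect_matching V E M \<longleftrightarrow> is_matching E M \<and> \<Union>M = V"

definition ordered_partition3 :: "'a set \<Rightarrow> 'a set \<Rightarrow> 'a set \<Rightarrow> 'a set \<Rightarrow> bool" where
  "ordered_partition3 X E0 E1 E2 \<longleftrightarrow>
     E0 \<inter> E1 = {} \<and> E0 \<inter> E2 = {} \<and> E1 \<inter> E2 = {} \<and> E0 \<union> E1 \<union> E2 = X"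

definition good_matching :: "'a set set \<Rightarrow> 'a set set \<Rightarrow> 'a set set \<Rightarrow> 'a set set \<Rightarrow> 'a set set \<Rightarrow> bool" where
  "good_matching E E0 E1 E2 M \<longleftrightarrow> is_matching E M \<and> M \<inter> E2 = {} \<and> card (M \<inter> E1) \<le> 1"

end

theory Submission
  imports Defs "HOL-Number_Theory.Cong"
begin

text \<open>
  For even \<open>N\<close>, the complete graph on \<open>{1..N}\<close> splits into \<open>N - 1\<close> perfect matchings
  (the round-robin 1-factorisation). Every edge lies in exactly one of them, so the total
  weight \<open>|E\<^sub>1| + 2|E\<^sub>2| < 2(N - 1)\<close> is shared among \<open>N - 1\<close> matchings and one of them
  has weight below 2: it avoids \<open>E\<^sub>2\<close> and meets \<open>E\<^sub>1\<close> at most once.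
\<close>

lemma complete_edges_iff:
  "e \<in> complete_edges V \<longleftrightarrow> (\<exists>x y. e = {x, y} \<and> x \<noteq> y \<and> x \<in> V \<and> y \<in> V)"
  unfolding complete_edges_def card_2_iff by auto

lemma complete_edges_at:
  assumes "e \<in> complete_edges V" "x \<in> e"
  shows "\<exists>y. e = {x, y} \<and> y \<in> V - {x}"
  using assms unfolding complete_edges_iff by auto

lemma finite_complete_edges: "finite V \<Longrightarrow> finite (complete_edges V)"
  by (rule finite_subset[of _ "Pow V"]) (auto simp: complete_edges_def)

lemma colour_class_perfect_matching:
  fixes col :: "'a set \<Rightarrow> 'b"
  assumes proper: "\<And>x. x \<in> V \<Longrightarrow> inj_on (\<lambda>y. col {x, y}) (V - {x})"
    and present: "\<And>x. x \<in> V \<Longrightarrow> c \<in> (\<lambda>y. col {x, y}) ` (V - {x})"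
  shows "is_perfect_matching V (complete_edges V) {e \<in> complete_edges V. col e = c}"
  unfolding is_perfect_matching_def is_matching_def
proof (intro conjI ballI impI)
  let ?M = "{e \<in> complete_edges V. col e = c}"
  show "?M \<subseteq> complete_edges V" by blast
  fix e f assume e: "e \<in> ?M" and f: "f \<in> ?M" and "e \<noteq> f"
  show "e \<inter> f = {}"
  proof (rule ccontr)
    assume "e \<inter> f \<noteq> {}"
    then obtain x where "x \<in> e" "x \<in> f" by blast
    moreover from this obtain y z where "e = {x, y}" "y \<in> V - {x}" "f = {x, z}" "z \<in> V - {x}"
      using e f complete_edges_at by (metis (no_types, lifting) mem_Collect_eq)
    moreover have "x \<in> V" using e \<open>x \<in> e\<close> unfolding complete_edges_def by blast
    ultimately have "y = z" using e f proper[of x] by (auto dest: inj_onD)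
    then show False using \<open>e = {x, y}\<close> \<open>f = {x, z}\<close> \<open>e \<noteq> f\<close> by simp
  qed
next
  let ?M = "{e \<in> complete_edges V. col e = c}"
  have "x \<in> \<Union>?M" if "x \<in> V" for x
  proof -
    obtain y where "y \<in> V - {x}" "col {x, y} = c" using present[OF \<open>x \<in> V\<close>] by blast
    then have "{x, y} \<in> ?M" using \<open>x \<in> V\<close> unfolding complete_edges_iff by blast
    then show ?thesis by blast
  qed
  moreover have "\<Union>?M \<subseteq> V" unfolding complete_edges_def by blast
  ultimately show "\<Union>?M = V" by blast
qed

text \<open>
  Vertices \<open>1, \<dots>, N - 1\<close> are read modulo \<open>N - 1\<close>; the edge \<open>{x, y}\<close> among them gets colour
  \<open>x + y\<close>, and \<open>x\<close> is joined to the extra vertex \<open>N\<close> in colour \<open>2x\<close>, the one colour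
  \<open>x\<close> would otherwise miss.
\<close>
definition round_robin_colour :: "nat \<Rightarrow> nat set \<Rightarrow> nat" where
  "round_robin_colour N e = (if N \<in> e then 2 * (\<Sum>e - N) else \<Sum>e) mod (N - 1)"

lemma round_robin_colour_apex:
  "y \<noteq> N \<Longrightarrow> round_robin_colour N {N, y} = (2 * y) mod (N - 1)"
  by (simp add: round_robin_colour_def)

lemma round_robin_colour_edge:
  "x \<noteq> N \<Longrightarrow> x \<noteq> y \<Longrightarrow>
    round_robin_colour N {x, y} = (x + (if y = N then x else y)) mod (N - 1)"
  by (auto simp: round_robin_colour_def mult_2)

lemma inj_on_mod_atLeastAtMost: "inj_on (\<lambda>y. y mod m) {1..m::nat}"
  by (rule inj_onI) (metis atLeastAtMost_iff le_neq_implies_less mod_less mod_self not_one_le_zero)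

lemma round_robin_colour_inj_on:
  assumes "even N" "x \<in> {1..N}"
  shows "inj_on (\<lambda>y. round_robin_colour N {x, y}) ({1..N} - {x})"
proof (rule inj_onI)
  define m where "m = N - 1"
  have "odd m" using assms unfolding m_def by auto
  have residues: "y = z" if "y mod m = z mod m" "y \<in> {1..m}" "z \<in> {1..m}" for y z
    using inj_onD[OF inj_on_mod_atLeastAtMost that(1)] that(2,3) .
  fix y z assume y: "y \<in> {1..N} - {x}" and z: "z \<in> {1..N} - {x}"
    and eq: "round_robin_colour N {x, y} = round_robin_colour N {x, z}"
  show "y = z"
  proof (cases "x = N")
    case True
    then have "[2 * y = 2 * z] (mod m)"
      using eq y z by (simp add: round_robin_colour_apex cong_def m_def)
    then have "[y = z] (mod m)"
      using \<open>odd m\<close> by (simp add: cong_mult_lcancel_nat)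
    then show ?thesis using True y z residues unfolding cong_def m_def by auto
  next
    case False
    define t where "t y = (if y = N then x else y)" for y
    have "[x + t y = x + t z] (mod m)"
      using eq y z False by (simp add: round_robin_colour_edge cong_def m_def t_def)
    then have "[t y = t z] (mod m)" by (simp only: cong_add_lcancel_nat)
    then have "t y mod m = t z mod m" unfolding cong_def .
    moreover have "t y \<in> {1..m}" "t z \<in> {1..m}"
      using y z False assms(2) unfolding t_def m_def by auto
    ultimately have "t y = t z" by (rule residues)
    then show ?thesis using y z unfolding t_def by (auto split: if_splits)
  qed
qed

lemma round_robin_colour_image:
  assumes "even N" "x \<in> {1..N}"
  shows "(\<lambda>y. round_robin_colour N {x, y}) ` ({1..N} - {x}) = {..<N - 1}"
proof (rule card_subset_eq)
  have "N \<ge> 2" using assms by auto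
  then show "(\<lambda>y. round_robin_colour N {x, y}) ` ({1..N} - {x}) \<subseteq> {..<N - 1}"
    by (auto simp: round_robin_colour_def)
  show "card ((\<lambda>y. round_robin_colour N {x, y}) ` ({1..N} - {x})) = card {..<N - 1}"
    using card_image[OF round_robin_colour_inj_on[OF assms]] assms(2) by simp
qed simp

lemma round_robin_perfect_matching:
  assumes "even N" "c < N - 1"
  shows "is_perfect_matching {1..N} (complete_edges {1..N})
           {e \<in> complete_edges {1..N}. round_robin_colour N e = c}"
  using assms round_robin_colour_inj_on round_robin_colour_image
  by (intro colour_class_perfect_matching) auto

lemma sum_card_Int_disjoint_family_le:
  assumes "finite E" "\<And>i j. i \<noteq> j \<Longrightarrow> A i \<inter> A j = {}"
  shows "(\<Sum>i\<in>I. card (A i \<inter> E)) \<le> card E"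
proof (cases "finite I")
  case True
  then have "(\<Sum>i\<in>I. card (A i \<inter> E)) = card (\<Union>i\<in>I. A i \<inter> E)"
    using assms by (subst card_UN_disjoint) auto
  also have "\<dots> \<le> card E" using assms(1) by (intro card_mono) auto
  finally show ?thesis .
qed simp

lemma disjoint_family_light_member:
  assumes "finite E1" "finite E2" "\<And>i j. i \<noteq> j \<Longrightarrow> A i \<inter> A j = {}"
    and "card E1 + 2 * card E2 < 2 * m"
  shows "\<exists>c<m. A c \<inter> E2 = {} \<and> card (A c \<inter> E1) \<le> 1"
proof (rule ccontr)
  assume no_light: "\<not> ?thesis"
  have "2 \<le> card (A c \<inter> E1) + 2 * card (A c \<inter> E2)" if "c < m" for c
  proof (cases "A c \<inter> E2 = {}")
    case True
    then show ?thesis using no_light that by auto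
  next
    case False
    then have "card (A c \<inter> E2) \<ge> 1" using assms(2) by (simp add: Suc_le_eq card_gt_0_iff)
    then show ?thesis by linarith
  qed
  then have "(\<Sum>c<m. 2) \<le> (\<Sum>c<m. card (A c \<inter> E1) + 2 * card (A c \<inter> E2))"
    by (intro sum_mono) simp
  then have "2 * m \<le> (\<Sum>c<m. card (A c \<inter> E1)) + 2 * (\<Sum>c<m. card (A c \<inter> E2))"
    by (simp add: sum.distrib sum_distrib_left mult.commute)
  also have "\<dots> \<le> card E1 + 2 * card E2"
    using sum_card_Int_disjoint_family_le[OF assms(1,3)] sum_card_Int_disjoint_family_le[OF assms(2,3)]
    by (intro add_le_mono mult_le_mono2)
  finally show False using assms(4) by simp
qed

theorem lemma11:
  fixes r k :: nat and E0 E1 E2 :: "nat set set"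
  assumes "r > 0" and "k > 0" and "even (r + k)" and "k \<le> r"
    and "ordered_partition3 (complete_edges {1..r+k}) E0 E1 E2"
    and "card E1 + 2 * card E2 < 2 * (r + k - 1)"
  shows "\<exists>M. is_perfect_matching {1..r+k} (complete_edges {1..r+k}) M
             \<and> good_matching (complete_edges {1..r+k}) E0 E1 E2 M"
proof -
  define N where "N = r + k"
  define A where "A c = {e \<in> complete_edges {1..N}. round_robin_colour N e = c}" for c
  have "E1 \<subseteq> complete_edges {1..N}" "E2 \<subseteq> complete_edges {1..N}"
    using assms(5) unfolding ordered_partition3_def N_def by auto
  then have "finite E1" "finite E2"
    using finite_complete_edges finite_subset by blast+
  moreover have "A i \<inter> A j = {}" if "i \<noteq> j" for i j using that unfolding A_def by auto
  ultimately obtain c where "c < N - 1" "A c \<inter> E2 = {}" "card (A c \<inter> E1) \<le> 1"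
    using disjoint_family_light_member assms(6) unfolding N_def by blast
  moreover have "is_perfect_matching {1..N} (complete_edges {1..N}) (A c)"
    unfolding A_def using round_robin_perfect_matching assms(3) \<open>c < N - 1\<close> N_def by blast
  ultimately show ?thesis
    unfolding good_matching_def is_perfect_matching_def N_def by blast
qed

end
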